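(* Let $P\subset\mathbb{R}^d$ be a finite dataset with $|P|=n$, let $s$ be the number of compute nodes, $t<s$, $\delta>0$, and let $A\in\{0,1\}^{s\times n}$ (columns indexed by the points of $P$) satisfy the straggler-resilience property with parameter $\delta$. For $i\in[s]$ let $P_i$ be the set of points of $P$ whose column has a $1$ in row $i$. Let $\mathcal{R}\subseteq[s]$ with $|\mathcal{R}|\ge s-t$ and let $\mathbf{b}=(b_i)_{i\in\mathcal{R}}$ be a corresponding non-negative recovery vector. Let $0<\epsilon<1/3$ and for each $i\in\mathcal{R}$ let $(S_i,w_i)$ be an $\epsilon$-coreset for $P_i$ with respect to a cost function $\mathrm{cost}$ of the form described in the context. Let $S$ be the disjoint union of the $S_i$, $i\in\mathcal{R}$, with weight $w(\mathbf{c})=b_i\,w_i(\mathbf{c})$ for $\mathbf{c}\in S_i$. Then $(S,w)$ is a $2(\epsilon+\delta)$-coreset for $P$, i.e., for every admissible center set $C$, $$(1-2(\epsilon+\delta))\,\mathrm{cost}(P,C)\le\mathrm{cost}(S,C,w)\le(1+2(\epsilon+\delta))\,\mathrm{cost}(P,C).$$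
   Context: The cost function is additive: there is a non-negative function $D(\mathbf{x},C)$ (e.g. $D(\mathbf{x},C)=\min_{\mathbf{c}\in C}\|\mathbf{x}-\mathbf{c}\|_2$ for $k$-median, its square for $k$-means, or the squared distance to the nearest of $k$ $r$-dimensional subspaces for $(r,k)$-subspace clustering) such that for a finite set $Q$ with weights $w$, $\mathrm{cost}(Q,C,w)=\sum_{\mathbf{q}\in Q}w(\mathbf{q})D(\mathbf{q},C)$, and $\mathrm{cost}(Q,C)$ is this with all weights $1$. An $\epsilon$-coreset ($0<\epsilon<1/3$) for a dataset $Q$ is a weighted set $(S',w')$ such that for every center set $C$, $(1-\epsilon)\mathrm{cost}(Q,C)\le\mathrm{cost}(S',C,w')\le(1+\epsilon)\mathrm{cost}(Q,C)$. Straggler-resilience property with parameter $\delta$: for every $\mathcal{R}\subseteq[s]$ with $|\mathcal{R}|\ge s-t$, letting $A_{\mathcal{R}}$ be the rows of $A$ indexed by $\mathcal{R}$, there is $\mathbf{b}\in\mathbb{R}^{|\mathcal{R}|}$ with non-negative entries (a recovery vector) such that $\mathbf{b}^TA_{\mathcal{R}}=(a_1,\ldots,a_n)$ with $1\le a_j\le 1+\delta$ for all $j$. *)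

theory Defs
  imports "HOL-Analysis.Analysis"
begin

text \<open>Additive clustering cost. D x C is the (non-negative) cost of point x
  w.r.t. the center set C (C ranges over an arbitrary type of admissible center sets).\<close>

definition cost :: "('p \<Rightarrow> 'c \<Rightarrow> real) \<Rightarrow> 'p set \<Rightarrow> 'c \<Rightarrow> real" where
  "cost D Q C = (\<Sum>q\<in>Q. D q C)"

definition wcost :: "('p \<Rightarrow> 'c \<Rightarrow> real) \<Rightarrow> 'p set \<Rightarrow> ('p \<Rightarrow> real) \<Rightarrow> 'c \<Rightarrow> real" where
  "wcost D Q w C = (\<Sum>q\<in>Q. w q * D q C)"

definition is_coreset :: "('p \<Rightarrow> 'c \<Rightarrow> real) \<Rightarrow> real \<Rightarrow> 'p set \<Rightarrow> 'p set \<Rightarrow> ('p \<Rightarrow> real) \<Rightarrow> bool" where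
  "is_coreset D eps Q S w \<longleftrightarrow> finite S \<and>
     (\<forall>C. (1 - eps) * cost D Q C \<le> wcost D S w C \<and> wcost D S w C \<le> (1 + eps) * cost D Q C)"

text \<open>Rows of A are indexed by [s] = {1..s}, columns by the points of P.
  b (restricted to R) is a non-negative recovery vector with parameter delta.\<close>
definition recovery_vector ::
  "(nat \<Rightarrow> 'p \<Rightarrow> real) \<Rightarrow> 'p set \<Rightarrow> nat set \<Rightarrow> real \<Rightarrow> (nat \<Rightarrow> real) \<Rightarrow> bool" where
  "recovery_vector A P R \<delta> b \<longleftrightarrow> (\<forall>i\<in>R. 0 \<le> b i) \<and>
     (\<forall>p\<in>P. 1 \<le> (\<Sum>i\<in>R. b i * A i p) \<and> (\<Sum>i\<in>R. b i * A i p) \<le> 1 + \<delta>)"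

definition straggler_resilient ::
  "(nat \<Rightarrow> 'p \<Rightarrow> real) \<Rightarrow> 'p set \<Rightarrow> nat \<Rightarrow> nat \<Rightarrow> real \<Rightarrow> bool" where
  "straggler_resilient A P s t \<delta> \<longleftrightarrow>
     (\<forall>R. R \<subseteq> {1..s} \<and> card R \<ge> s - t \<longrightarrow> (\<exists>b. recovery_vector A P R \<delta> b))"

text \<open>Weighted cost of the disjoint union of the S i (i in R), tagging each copy by i,
  with weight wt i c on the copy of c coming from S i.\<close>
definition union_wcost ::
  "('p \<Rightarrow> 'c \<Rightarrow> real) \<Rightarrow> nat set \<Rightarrow> (nat \<Rightarrow> 'p set) \<Rightarrow> (nat \<Rightarrow> 'p \<Rightarrow> real) \<Rightarrow> 'c \<Rightarrow> real" where
  "union_wcost D R S wt C = (\<Sum>(i, c)\<in>(SIGMA i:R. S i). wt i c * D c C)"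

end

theory Submission
  imports Defs
begin

text \<open>Weighting the coreset of the \<open>i\<close>-th part by \<open>b i\<close> turns the \<open>\<epsilon>\<close>-guarantees of the parts
  into an \<open>\<epsilon>\<close>-guarantee for \<open>\<Sum>i. b i \<cdot> cost(P\<^sub>i)\<close>. Since \<open>A\<close> is a 0/1 matrix, this sum equals
  \<open>\<Sum>p\<in>P. (b\<^sup>T A)\<^sub>p \<cdot> D p C\<close>, and the recovery property \<open>1 \<le> (b\<^sup>T A)\<^sub>p \<le> 1 + \<delta>\<close> puts it between
  \<open>cost(P)\<close> and \<open>(1 + \<delta>) cost(P)\<close>. The two multiplicative errors compose to \<open>(1 + \<epsilon>)(1 + \<delta>)\<close>,
  which is at most \<open>1 + 2(\<epsilon> + \<delta>)\<close>.\<close>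

lemma cost_nonneg: "(\<And>x C. 0 \<le> D x C) \<Longrightarrow> 0 \<le> cost D Q C"
  unfolding cost_def by (simp add: sum_nonneg)

lemma cost_filter_eq_sum_indicator:
  assumes "finite P" and "\<And>p. p \<in> P \<Longrightarrow> a p \<in> {0, 1}"
  shows "cost D {p \<in> P. a p = 1} C = (\<Sum>p\<in>P. a p * D p C)"
proof -
  have "cost D {p \<in> P. a p = 1} C = (\<Sum>p\<in>P. if a p = 1 then D p C else 0)"
    unfolding cost_def using assms(1) by (simp add: sum.If_cases Int_def)
  also have "\<dots> = (\<Sum>p\<in>P. a p * D p C)"
    using assms(2) by (intro sum.cong) auto
  finally show ?thesis .
qed

lemma sum_weighted_cover_cost:
  assumes "finite P" and "\<And>i p. i \<in> R \<Longrightarrow> p \<in> P \<Longrightarrow> A i p \<in> {0, 1}"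
  shows "(\<Sum>i\<in>R. b i * cost D {p \<in> P. A i p = 1} C) = (\<Sum>p\<in>P. (\<Sum>i\<in>R. b i * A i p) * D p C)"
proof -
  have row: "cost D {p \<in> P. A i p = 1} C = (\<Sum>p\<in>P. A i p * D p C)" if "i \<in> R" for i
    using assms that by (intro cost_filter_eq_sum_indicator) auto
  have "(\<Sum>i\<in>R. b i * cost D {p \<in> P. A i p = 1} C) = (\<Sum>i\<in>R. \<Sum>p\<in>P. b i * A i p * D p C)"
    using row by (simp add: sum_distrib_left mult.assoc)
  also have "\<dots> = (\<Sum>p\<in>P. (\<Sum>i\<in>R. b i * A i p) * D p C)"
    by (simp add: sum.swap[of _ R] sum_distrib_right)
  finally show ?thesis .
qed

lemma recovery_vector_cover_cost_bounds:
  assumes b: "recovery_vector A P R \<delta> b" and "finite P"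
    and "\<And>i p. i \<in> R \<Longrightarrow> p \<in> P \<Longrightarrow> A i p \<in> {0, 1}"
    and D_nonneg: "\<And>x C. 0 \<le> D x C"
  shows "cost D P C \<le> (\<Sum>i\<in>R. b i * cost D {p \<in> P. A i p = 1} C)"
    and "(\<Sum>i\<in>R. b i * cost D {p \<in> P. A i p = 1} C) \<le> (1 + \<delta>) * cost D P C"
proof -
  have cover: "1 \<le> (\<Sum>i\<in>R. b i * A i p)" "(\<Sum>i\<in>R. b i * A i p) \<le> 1 + \<delta>" if "p \<in> P" for p
    using b that unfolding recovery_vector_def by auto
  have eq: "(\<Sum>i\<in>R. b i * cost D {p \<in> P. A i p = 1} C) = (\<Sum>p\<in>P. (\<Sum>i\<in>R. b i * A i p) * D p C)"
    by (rule sum_weighted_cover_cost[OF assms(2,3)])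
  show "cost D P C \<le> (\<Sum>i\<in>R. b i * cost D {p \<in> P. A i p = 1} C)"
    unfolding eq unfolding cost_def
    by (intro sum_mono) (use cover(1) D_nonneg in \<open>metis mult_1 mult_right_mono\<close>)
  show "(\<Sum>i\<in>R. b i * cost D {p \<in> P. A i p = 1} C) \<le> (1 + \<delta>) * cost D P C"
    unfolding eq unfolding cost_def sum_distrib_left
    by (intro sum_mono) (use cover(2) D_nonneg in \<open>simp add: mult_right_mono\<close>)
qed

lemma union_wcost_scaled:
  assumes "finite R" and "\<And>i. i \<in> R \<Longrightarrow> finite (S i)"
  shows "union_wcost D R S (\<lambda>i c. b i * w i c) C = (\<Sum>i\<in>R. b i * wcost D (S i) (w i) C)"
  unfolding union_wcost_def wcost_def
  using assms by (simp add: sum.Sigma[symmetric] sum_distrib_left mult.assoc)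

lemma union_wcost_coreset_bounds:
  assumes "finite R" and b_nonneg: "\<And>i. i \<in> R \<Longrightarrow> 0 \<le> b i"
    and cores: "\<And>i. i \<in> R \<Longrightarrow> is_coreset D \<epsilon> (Q i) (S i) (w i)"
  shows "(1 - \<epsilon>) * (\<Sum>i\<in>R. b i * cost D (Q i) C) \<le> union_wcost D R S (\<lambda>i c. b i * w i c) C"
    and "union_wcost D R S (\<lambda>i c. b i * w i c) C \<le> (1 + \<epsilon>) * (\<Sum>i\<in>R. b i * cost D (Q i) C)"
proof -
  have eq: "union_wcost D R S (\<lambda>i c. b i * w i c) C = (\<Sum>i\<in>R. b i * wcost D (S i) (w i) C)"
    using cores unfolding is_coreset_def by (intro union_wcost_scaled[OF assms(1)]) blast
  have part: "(1 - \<epsilon>) * cost D (Q i) C \<le> wcost D (S i) (w i) C"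
    "wcost D (S i) (w i) C \<le> (1 + \<epsilon>) * cost D (Q i) C" if "i \<in> R" for i
    using cores[OF that] unfolding is_coreset_def by auto
  show "(1 - \<epsilon>) * (\<Sum>i\<in>R. b i * cost D (Q i) C) \<le> union_wcost D R S (\<lambda>i c. b i * w i c) C"
    unfolding eq sum_distrib_left
    by (intro sum_mono) (use part(1) b_nonneg in \<open>metis mult.left_commute mult_left_mono\<close>)
  show "union_wcost D R S (\<lambda>i c. b i * w i c) C \<le> (1 + \<epsilon>) * (\<Sum>i\<in>R. b i * cost D (Q i) C)"
    unfolding eq sum_distrib_left
    by (intro sum_mono) (use part(2) b_nonneg in \<open>metis mult.left_commute mult_left_mono\<close>)
qed

lemma approximation_factors_compose:
  fixes c X U \<epsilon> \<delta> :: real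
  assumes "0 \<le> c" "0 \<le> \<epsilon>" "\<epsilon> \<le> 1" "0 \<le> \<delta>"
    and "c \<le> X" "X \<le> (1 + \<delta>) * c"
    and "(1 - \<epsilon>) * X \<le> U" "U \<le> (1 + \<epsilon>) * X"
  shows "(1 - 2 * (\<epsilon> + \<delta>)) * c \<le> U \<and> U \<le> (1 + 2 * (\<epsilon> + \<delta>)) * c"
proof
  have "(1 - 2 * (\<epsilon> + \<delta>)) * c \<le> (1 - \<epsilon>) * c"
    using assms(1,2,4) by (intro mult_right_mono) auto
  also have "\<dots> \<le> (1 - \<epsilon>) * X"
    using assms(3,5) by (intro mult_left_mono) auto
  finally show "(1 - 2 * (\<epsilon> + \<delta>)) * c \<le> U"
    using assms(7) by linarith
next
  have "U \<le> (1 + \<epsilon>) * ((1 + \<delta>) * c)"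
    using assms(2,6,8) by (smt (verit) mult_left_mono)
  also have "\<dots> = (1 + \<epsilon> + \<delta> + \<epsilon> * \<delta>) * c"
    by (simp add: algebra_simps)
  also have "\<dots> \<le> (1 + 2 * (\<epsilon> + \<delta>)) * c"
    using assms(1-4) mult_right_mono[of \<epsilon> 1 \<delta>] by (intro mult_right_mono) auto
  finally show "U \<le> (1 + 2 * (\<epsilon> + \<delta>)) * c" .
qed

theorem lemma3:
  fixes P :: "(real ^ 'd) set"
    and D :: "real ^ 'd \<Rightarrow> 'c \<Rightarrow> real"
    and A :: "nat \<Rightarrow> real ^ 'd \<Rightarrow> real"
    and s t :: nat and \<delta> \<epsilon> :: real
    and R :: "nat set" and b :: "nat \<Rightarrow> real"
    and S :: "nat \<Rightarrow> (real ^ 'd) set" and w :: "nat \<Rightarrow> real ^ 'd \<Rightarrow> real"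
  assumes D_nonneg: "\<And>x C. 0 \<le> D x C"
    and finP: "finite P"
    and ts: "t < s"
    and delta: "\<delta> > 0"
    and A01: "\<And>i p. i \<in> {1..s} \<Longrightarrow> p \<in> P \<Longrightarrow> A i p \<in> {0, 1}"
    and strag: "straggler_resilient A P s t \<delta>"
    and R: "R \<subseteq> {1..s}" "card R \<ge> s - t"
    and b: "recovery_vector A P R \<delta> b"
    and eps: "0 < \<epsilon>" "\<epsilon> < 1/3"
    and cores: "\<And>i. i \<in> R \<Longrightarrow> is_coreset D \<epsilon> {p \<in> P. A i p = 1} (S i) (w i)"
  shows "\<forall>C. (1 - 2 * (\<epsilon> + \<delta>)) * cost D P C \<le> union_wcost D R S (\<lambda>i c. b i * w i c) C
           \<and> union_wcost D R S (\<lambda>i c. b i * w i c) C \<le> (1 + 2 * (\<epsilon> + \<delta>)) * cost D P C"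
proof
  fix C
  have finR: "finite R" using R(1) finite_subset by blast
  have A01_R: "\<And>i p. i \<in> R \<Longrightarrow> p \<in> P \<Longrightarrow> A i p \<in> {0, 1}" using A01 R(1) by blast
  have b_nonneg: "\<And>i. i \<in> R \<Longrightarrow> 0 \<le> b i" using b unfolding recovery_vector_def by blast
  note recovery = recovery_vector_cover_cost_bounds[where C = C, OF b finP A01_R D_nonneg]
  note coreset = union_wcost_coreset_bounds[where C = C, OF finR b_nonneg cores]
  show "(1 - 2 * (\<epsilon> + \<delta>)) * cost D P C \<le> union_wcost D R S (\<lambda>i c. b i * w i c) C
           \<and> union_wcost D R S (\<lambda>i c. b i * w i c) C \<le> (1 + 2 * (\<epsilon> + \<delta>)) * cost D P C"
    by (rule approximation_factors_compose[OF cost_nonneg[OF D_nonneg] _ _ _ recovery coreset])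
      (use eps delta in auto)
qed

end
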